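(* Let $p\ge 1$ and $r_p(x)=\sum_{j=0}^{p}\frac{(-\mathrm{i}x)^j}{j!}$ for real $x$. Then there exists $\eta_s>0$ such that $|r_p(x)|<1$ for all $0<x<\pi\eta_s$ if and only if $p=4m$ or $p=4m-1$ for some positive integer $m$. Moreover, if $p\not\equiv 0,3 \pmod 4$, then $|r_p(x)|>1$ for all sufficiently small $x>0$. *)

theory Defs
  imports Complex_Main
begin

definition rp :: "nat \<Rightarrow> real \<Rightarrow> complex" where
  "rp p x = (\<Sum>j=0..p. (- \<i> * complex_of_real x) ^ j / of_nat (fact j))"

end

theory Submission
  imports Defs
begin

text \<open>
  As a Taylor polynomial of \<open>e\<^sup>-\<^sup>i\<^sup>x\<close>, \<open>r\<^sub>p\<close> satisfies
  \<open>r\<^sub>p' = -i r\<^sub>p\<^sub>-\<^sub>1 = -i (r\<^sub>p - (-ix)\<^sup>p/p!)\<close>. Differentiating \<open>|r\<^sub>p|\<^sup>2\<close>, the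
  contributions \<open>\<plusminus>i|r\<^sub>p|\<^sup>2\<close> cancel and \<open>(|r\<^sub>p|\<^sup>2)' = 2 x\<^sup>p/p! \<cdot> Im (i\<^sup>p r\<^sub>p)\<close>.
  Since \<open>r\<^sub>p(x) = 1 - ix + O(x\<^sup>2)\<close>, for small \<open>x > 0\<close> we have \<open>Re r\<^sub>p > 0\<close> and
  \<open>Im r\<^sub>p < 0\<close>, so the sign of \<open>Im (i\<^sup>p r\<^sub>p)\<close> depends only on \<open>p mod 4\<close>: it is negative
  for \<open>p \<equiv> 0, 3\<close> and positive for \<open>p \<equiv> 1, 2\<close>. Starting from \<open>|r\<^sub>p(0)| = 1\<close>, the
  modulus therefore drops below \<open>1\<close> in the first case and rises above it in the second.
\<close>

lemma has_field_derivative_exp_taylor_term: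
  "((\<lambda>z. (- \<i> * z) ^ Suc n / of_nat (fact (Suc n)))
      has_field_derivative - \<i> * ((- \<i> * z) ^ n / of_nat (fact n))) (at z)"
proof -
  have "((\<lambda>z. (- \<i> * z) ^ Suc n) has_field_derivative
      of_nat (Suc n) * (- \<i> * (- \<i> * z) ^ n)) (at z)"
    using DERIV_power[OF DERIV_cmult_Id[of "- \<i>" z], of "Suc n"]
    by (simp only: diff_Suc_Suc diff_zero)
  then have "((\<lambda>z. (- \<i> * z) ^ Suc n / of_nat (fact (Suc n))) has_field_derivative
      of_nat (Suc n) * (- \<i> * (- \<i> * z) ^ n) / of_nat (fact (Suc n))) (at z)"
    by (rule DERIV_cdivide)
  moreover have "of_nat (Suc n) * (- \<i> * (- \<i> * z) ^ n) / of_nat (fact (Suc n)) =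
      - \<i> * ((- \<i> * z) ^ n / (of_nat (fact n) :: complex))"
    by (simp only: fact_Suc of_nat_mult) (simp add: field_simps del: of_nat_Suc)
  ultimately show ?thesis by (simp only:)
qed

lemma rp_0 [simp]: "rp p 0 = 1"
proof -
  have "rp p 0 = (\<Sum>j=0..p. if j = 0 then 1 else 0)"
    unfolding rp_def by (intro sum.cong) (auto simp: power_0_left)
  then show ?thesis by simp
qed

lemma rp_Suc: "rp (Suc p) x = rp p x + (- \<i> * of_real x) ^ Suc p / of_nat (fact (Suc p))"
  unfolding rp_def by (rule sum.atLeast0_atMost_Suc)

lemma isCont_rp: "isCont (rp p) x"
  unfolding rp_def by (intro continuous_intros) auto

lemma has_vector_derivative_rp_Suc:
  "(rp (Suc p) has_vector_derivative - \<i> * rp p x) (at x)"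
proof (induction p)
  case 0
  show ?case
    unfolding rp_def by (auto intro!: derivative_eq_intros)
next
  case (Suc p)
  have "((\<lambda>x. (- \<i> * of_real x) ^ Suc (Suc p) / of_nat (fact (Suc (Suc p))))
      has_vector_derivative - \<i> * ((- \<i> * of_real x) ^ Suc p / of_nat (fact (Suc p)))) (at x)"
    by (rule has_vector_derivative_real_field[OF has_field_derivative_exp_taylor_term])
  from has_vector_derivative_add[OF Suc.IH this]
  have "((\<lambda>x. rp (Suc p) x + (- \<i> * of_real x) ^ Suc (Suc p) / of_nat (fact (Suc (Suc p))))
      has_vector_derivative - \<i> * rp (Suc p) x) (at x)"
    unfolding rp_Suc[of p x] by (simp only: distrib_left)
  moreover have "rp (Suc (Suc p)) =
      (\<lambda>x. rp (Suc p) x + (- \<i> * of_real x) ^ Suc (Suc p) / of_nat (fact (Suc (Suc p))))"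
    by (rule ext) (rule rp_Suc)
  ultimately show ?case by simp
qed

lemma has_real_derivative_norm_rp_squared:
  "((\<lambda>x. (cmod (rp p x))\<^sup>2) has_real_derivative
      2 * x ^ p / fact p * Im (\<i> ^ p * rp p x)) (at x)"
proof (cases p)
  case 0
  then show ?thesis by (simp add: rp_def)
next
  case (Suc q)
  let ?t = "(- \<i> * of_real x) ^ p / of_nat (fact p)"
  have "rp q x = rp p x - ?t"
    unfolding Suc rp_Suc by simp
  then have deriv: "(rp p has_vector_derivative - \<i> * (rp p x - ?t)) (at x)"
    using has_vector_derivative_rp_Suc[of q x] unfolding Suc by simp
  have norm_eq: "(\<lambda>x. (cmod (rp p x))\<^sup>2) = (\<lambda>x. Re (rp p x * cnj (rp p x)))"
    by (metis Re_complex_of_real complex_norm_square)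
  have "((\<lambda>x. Re (rp p x * cnj (rp p x))) has_real_derivative
      Re (rp p x * cnj (- \<i> * (rp p x - ?t)) + - \<i> * (rp p x - ?t) * cnj (rp p x))) (at x)"
    by (intro has_field_derivative_Re has_vector_derivative_mult deriv has_vector_derivative_cnj)
  moreover have "Re (w * cnj (- \<i> * (w - t)) + - \<i> * (w - t) * cnj w) = 2 * Im (cnj t * w)" for w t
    by (simp add: algebra_simps)
  moreover have "cnj ?t = of_real (x ^ p / fact p) * \<i> ^ p"
    by (simp add: power_mult_distrib)
  moreover have "Im (of_real r * \<i> ^ p * w) = r * Im (\<i> ^ p * w)" for r w
    by (simp add: mult.assoc)
  ultimately show ?thesis
    unfolding norm_eq by (simp only: mult.assoc times_divide_eq_left times_divide_eq_right)
qed

lemma eventually_less_at_right_if_deriv_neg: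
  fixes f f' :: "real \<Rightarrow> real"
  assumes deriv: "\<And>x. (f has_real_derivative f' x) (at x)"
    and neg: "eventually (\<lambda>x. f' x < 0) (at_right a)"
  shows "eventually (\<lambda>x. f x < f a) (at_right a)"
proof -
  obtain b where "a < b" and b: "\<And>y. a < y \<Longrightarrow> y < b \<Longrightarrow> f' y < 0"
    using neg unfolding eventually_at_right_field by blast
  have "f x < f a" if "a < x" "x < b" for x
  proof (rule DERIV_neg_imp_decreasing_open[OF \<open>a < x\<close>])
    show "\<exists>l. (f has_real_derivative l) (at y) \<and> l < 0" if "a < y" "y < x" for y
      using deriv b that \<open>x < b\<close> by force
    show "continuous_on {a..x} f"
      by (intro continuous_at_imp_continuous_on ballI DERIV_isCont[OF deriv])
  qed
  then show ?thesis
    unfolding eventually_at_right_field using \<open>a < b\<close> by blast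
qed

lemma eventually_greater_at_right_if_deriv_pos:
  fixes f f' :: "real \<Rightarrow> real"
  assumes "\<And>x. (f has_real_derivative f' x) (at x)"
    and "eventually (\<lambda>x. f' x > 0) (at_right a)"
  shows "eventually (\<lambda>x. f x > f a) (at_right a)"
proof -
  have "eventually (\<lambda>x. - f x < - f a) (at_right a)"
    by (rule eventually_less_at_right_if_deriv_neg[of _ "\<lambda>x. - f' x"])
      (use assms in \<open>auto intro: DERIV_minus\<close>)
  then show ?thesis
    by simp
qed

lemma eventually_Re_rp_pos: "eventually (\<lambda>x. Re (rp p x) > 0) (at_right 0)"
proof -
  have "((\<lambda>x. Re (rp p x)) \<longlongrightarrow> 1) (at 0)"
    using tendsto_Re[OF isCont_rp[where p = p and x = 0, unfolded isCont_def]] by simp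
  then have "eventually (\<lambda>x. Re (rp p x) > 0) (at 0)"
    by (rule order_tendstoD) simp
  then show ?thesis
    unfolding eventually_at_split by blast
qed

lemma eventually_Im_rp_neg:
  assumes "p \<ge> 1"
  shows "eventually (\<lambda>x. Im (rp p x) < 0) (at_right 0)"
proof -
  obtain q where p: "p = Suc q"
    using assms by (cases p) auto
  have "((\<lambda>x. Im (rp p x)) has_real_derivative - Re (rp q x)) (at x)" for x
    using has_field_derivative_Im[OF has_vector_derivative_rp_Suc[of q x]] by (simp add: p)
  moreover have "eventually (\<lambda>x. - Re (rp q x) < 0) (at_right 0)"
    using eventually_Re_rp_pos[of q] by simp
  ultimately have "eventually (\<lambda>x. Im (rp p x) < Im (rp p 0)) (at_right 0)"
    by (rule eventually_less_at_right_if_deriv_neg)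
  then show ?thesis
    by simp
qed

lemma power_i_mod_4: "\<i> ^ n = \<i> ^ (n mod 4)"
proof -
  have "\<i> ^ n = (\<i> ^ 4) ^ (n div 4) * \<i> ^ (n mod 4)"
    by (simp only: power_mult [symmetric] power_add [symmetric] mult_div_mod_eq)
  then show ?thesis by simp
qed

lemma Im_i_power_mult:
  "n mod 4 = 0 \<Longrightarrow> Im (\<i> ^ n * z) = Im z"
  "n mod 4 = 1 \<Longrightarrow> Im (\<i> ^ n * z) = Re z"
  "n mod 4 = 2 \<Longrightarrow> Im (\<i> ^ n * z) = - Im z"
  "n mod 4 = 3 \<Longrightarrow> Im (\<i> ^ n * z) = - Re z"
  by (subst power_i_mod_4, simp add: power3_eq_cube)+

lemma eventually_norm_rp_less_1:
  assumes "p \<ge> 1" "p mod 4 = 0 \<or> p mod 4 = 3"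
  shows "eventually (\<lambda>x. cmod (rp p x) < 1) (at_right 0)"
proof -
  have "eventually (\<lambda>x. 2 * x ^ p / fact p * Im (\<i> ^ p * rp p x) < 0) (at_right 0)"
    using eventually_at_right_less[where x = "0 :: real"] eventually_Re_rp_pos[of p]
      eventually_Im_rp_neg[OF assms(1)]
  proof eventually_elim
    case (elim x)
    have "Im (\<i> ^ p * rp p x) < 0"
      using assms(2) elim Im_i_power_mult[of p "rp p x"] by auto
    moreover have "2 * x ^ p / fact p > 0"
      using \<open>0 < x\<close> by simp
    ultimately show ?case
      by (simp only: mult_pos_neg)
  qed
  from eventually_less_at_right_if_deriv_neg[OF has_real_derivative_norm_rp_squared this]
  show ?thesis
    by (simp add: abs_square_less_1)
qed

lemma eventually_norm_rp_greater_1: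
  assumes "p mod 4 = 1 \<or> p mod 4 = 2"
  shows "eventually (\<lambda>x. cmod (rp p x) > 1) (at_right 0)"
proof -
  have "p \<ge> 1"
    using assms by auto
  have "eventually (\<lambda>x. 2 * x ^ p / fact p * Im (\<i> ^ p * rp p x) > 0) (at_right 0)"
    using eventually_at_right_less[where x = "0 :: real"] eventually_Re_rp_pos[of p]
      eventually_Im_rp_neg[OF \<open>p \<ge> 1\<close>]
  proof eventually_elim
    case (elim x)
    have "Im (\<i> ^ p * rp p x) > 0"
      using assms elim Im_i_power_mult[of p "rp p x"] by auto
    moreover have "2 * x ^ p / fact p > 0"
      using \<open>0 < x\<close> by simp
    ultimately show ?case
      by (simp only: mult_pos_pos)
  qed
  from eventually_greater_at_right_if_deriv_pos[OF has_real_derivative_norm_rp_squared this]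
  show ?thesis
    by (simp add: abs_square_le_1 flip: not_le)
qed

lemma eventually_at_right_0_iff_scaled:
  fixes c :: real
  assumes "c > 0"
  shows "eventually P (at_right 0) \<longleftrightarrow> (\<exists>\<eta>>0. \<forall>x. 0 < x \<and> x < c * \<eta> \<longrightarrow> P x)"
proof
  assume "eventually P (at_right 0)"
  then obtain b where "b > 0" "\<And>x. 0 < x \<Longrightarrow> x < b \<Longrightarrow> P x"
    unfolding eventually_at_right_field by blast
  with assms show "\<exists>\<eta>>0. \<forall>x. 0 < x \<and> x < c * \<eta> \<longrightarrow> P x"
    by (intro exI[of _ "b / c"]) auto
next
  assume "\<exists>\<eta>>0. \<forall>x. 0 < x \<and> x < c * \<eta> \<longrightarrow> P x"
  with assms show "eventually P (at_right 0)"
    unfolding eventually_at_right_field by (metis mult_pos_pos)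
qed

theorem mainTheorem3:
  fixes p :: nat
  assumes "p \<ge> 1"
  shows "((\<exists>\<eta>::real. \<eta> > 0 \<and> (\<forall>x::real. 0 < x \<and> x < pi * \<eta> \<longrightarrow> cmod (rp p x) < 1))
           \<longleftrightarrow> (\<exists>m::nat. m \<ge> 1 \<and> (p = 4 * m \<or> p = 4 * m - 1)))
         \<and> (p mod 4 \<noteq> 0 \<and> p mod 4 \<noteq> 3 \<longrightarrow>
              (\<exists>\<delta>::real. \<delta> > 0 \<and> (\<forall>x::real. 0 < x \<and> x < \<delta> \<longrightarrow> cmod (rp p x) > 1)))"
proof -
  have residues: "(\<exists>m::nat. m \<ge> 1 \<and> (p = 4 * m \<or> p = 4 * m - 1)) \<longleftrightarrow>
      p mod 4 = 0 \<or> p mod 4 = 3"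
    using assms by presburger
  note window = eventually_at_right_0_iff_scaled[OF pi_gt_zero, symmetric]
  show ?thesis
  proof (cases "p mod 4 = 0 \<or> p mod 4 = 3")
    case True
    with eventually_norm_rp_less_1[OF assms True] show ?thesis
      unfolding window residues by auto
  next
    case False
    then have "p mod 4 = 1 \<or> p mod 4 = 2"
      by presburger
    note greater = eventually_norm_rp_greater_1[OF this]
    have "\<not> eventually (\<lambda>x. cmod (rp p x) < 1) (at_right 0)"
    proof
      assume "eventually (\<lambda>x. cmod (rp p x) < 1) (at_right 0)"
      with greater have "eventually (\<lambda>x. False) (at_right (0 :: real))"
        by eventually_elim auto
      then show False
        by simp
    qed
    moreover obtain \<delta> :: real where "\<delta> > 0" "\<forall>x. 0 < x \<and> x < \<delta> \<longrightarrow> cmod (rp p x) > 1"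
      using greater unfolding eventually_at_right_field by auto
    ultimately show ?thesis
      unfolding window residues using False by auto
  qed
qed

end
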